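(* Let $F$ be a field and $n\ge1$. For $r=\sum_i a_i\otimes b_i\in M_n(F)\otimes M_n(F)$ define $P_r\colon M_n(F)\to M_n(F)$ by $P_r(x)=\sum_i a_i x b_i$. Then the map $r\mapsto P_r$ is a bijection between the set of solutions $r\in M_n(F)\otimes M_n(F)$ of the associative Yang–Baxter equation and the set of Rota–Baxter operators of weight zero on $M_n(F)$.
   Context: A linear operator $R$ on an algebra $A$ is a Rota–Baxter operator of weight $0$ if $R(x)R(y)=R(R(x)y+xR(y))$ for all $x,y$. For an associative unital algebra $A$ and $r=\sum_i a_i\otimes b_i\in A\otimes A$, put $r_{12}=\sum a_i\otimes b_i\otimes 1$, $r_{13}=\sum a_i\otimes 1\otimes b_i$, $r_{23}=\sum 1\otimes a_i\otimes b_i$ in $A^{\otimes 3}$ (with componentwise multiplication). $r$ is a solution of the associative Yang–Baxter equation if $r_{13}r_{12}-r_{12}r_{23}+r_{23}r_{13}=0$. *)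

theory Defs
  imports "HOL-Analysis.Analysis"
begin

text \<open>The algebra M_n(F) is rendered as ('a::field)^'n^'n with 'n a finite index type
 (n = CARD('n) >= 1). Elements of M_n(F) (x) M_n(F) are given by their coordinates with respect
 to the basis E_ij (x) E_kl; elements of M_n(F)^(x)3 by coordinates w.r.t. E_ij (x) E_kl (x) E_mp.\<close>

type_synonym ('a,'n) tensor2 = "'n \<Rightarrow> 'n \<Rightarrow> 'n \<Rightarrow> 'n \<Rightarrow> 'a"
type_synonym ('a,'n) tensor3 = "'n \<Rightarrow> 'n \<Rightarrow> 'n \<Rightarrow> 'n \<Rightarrow> 'n \<Rightarrow> 'n \<Rightarrow> 'a"

definition E :: "'n::finite \<Rightarrow> 'n \<Rightarrow> ('a::field)^'n^'n" where
  "E i j = (\<chi> a b. if a = i \<and> b = j then 1 else 0)"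

definition elem3 :: "('a::field)^'n^'n \<Rightarrow> 'a^'n^'n \<Rightarrow> 'a^'n^'n \<Rightarrow> ('a,'n::finite) tensor3" where
  "elem3 a b c = (\<lambda>i j k l m p. a$i$j * b$k$l * c$m$p)"

definition r12 :: "('a::field,'n::finite) tensor2 \<Rightarrow> ('a,'n) tensor3" where
  "r12 r = (\<lambda>i j k l m p. \<Sum>a\<in>UNIV. \<Sum>b\<in>UNIV. \<Sum>c\<in>UNIV. \<Sum>d\<in>UNIV.
      r a b c d * elem3 (E a b) (E c d) (mat 1) i j k l m p)"

definition r13 :: "('a::field,'n::finite) tensor2 \<Rightarrow> ('a,'n) tensor3" where
  "r13 r = (\<lambda>i j k l m p. \<Sum>a\<in>UNIV. \<Sum>b\<in>UNIV. \<Sum>c\<in>UNIV. \<Sum>d\<in>UNIV.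
      r a b c d * elem3 (E a b) (mat 1) (E c d) i j k l m p)"

definition r23 :: "('a::field,'n::finite) tensor2 \<Rightarrow> ('a,'n) tensor3" where
  "r23 r = (\<lambda>i j k l m p. \<Sum>a\<in>UNIV. \<Sum>b\<in>UNIV. \<Sum>c\<in>UNIV. \<Sum>d\<in>UNIV.
      r a b c d * elem3 (mat 1) (E a b) (E c d) i j k l m p)"

text \<open>Componentwise multiplication in M_n(F)^(x)3, in coordinates:
 (E_ij (x) E_kl (x) E_mp)(E_i'j' (x) E_k'l' (x) E_m'p') = product taken in each factor.\<close>
definition mult3 :: "('a::field,'n::finite) tensor3 \<Rightarrow> ('a,'n) tensor3 \<Rightarrow> ('a,'n) tensor3" where
  "mult3 S T = (\<lambda>i j k l m p. \<Sum>q\<in>UNIV. \<Sum>s\<in>UNIV. \<Sum>t\<in>UNIV.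
      S i q k s m t * T q j s l t p)"

definition AYBE :: "('a::field,'n::finite) tensor2 \<Rightarrow> bool" where
  "AYBE r \<longleftrightarrow> (\<forall>i j k l m p.
      mult3 (r13 r) (r12 r) i j k l m p - mult3 (r12 r) (r23 r) i j k l m p
      + mult3 (r23 r) (r13 r) i j k l m p = 0)"

definition P :: "('a::field,'n::finite) tensor2 \<Rightarrow> 'a^'n^'n \<Rightarrow> 'a^'n^'n" where
  "P r x = (\<Sum>a\<in>UNIV. \<Sum>b\<in>UNIV. \<Sum>c\<in>UNIV. \<Sum>d\<in>UNIV.
      (\<chi> u v. r a b c d * (E a b ** x ** E c d)$u$v))"

definition msmult :: "'a::field \<Rightarrow> 'a^'n^'n \<Rightarrow> 'a^'n^'n" where
  "msmult c x = (\<chi> u v. c * x$u$v)"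

definition F_linear :: "(('a::field)^'n^'n \<Rightarrow> 'a^'n^'n) \<Rightarrow> bool" where
  "F_linear R \<longleftrightarrow> (\<forall>x y. R (x + y) = R x + R y) \<and> (\<forall>c x. R (msmult c x) = msmult c (R x))"

definition rota_baxter0 :: "(('a::field)^'n^'n \<Rightarrow> 'a^'n^'n) \<Rightarrow> bool" where
  "rota_baxter0 R \<longleftrightarrow> F_linear R \<and>
     (\<forall>x y. R x ** R y = R (R x ** y + x ** R y))"

end

theory Submission
  imports Defs
begin

text \<open>In matrix-unit coordinates the map r \<mapsto> P_r does nothing: the (u,v) entry of P_r(E_bc) is
  the coefficient r_ubcv, so r \<mapsto> P_r is a bijection from tensors onto F-linear maps.
  Both sides of the Rota--Baxter identity for P_r are bilinear, and its (u,v) entry at the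
  arguments E_\<alpha>\<beta>, E_\<gamma>\<delta> is exactly the (u,\<alpha>,\<beta>,\<gamma>,\<delta>,v) coordinate of the
  associative Yang--Baxter equation.\<close>

lemma sum_if_zero: "(\<Sum>x\<in>A. if Q then f x else 0) = (if Q then (\<Sum>x\<in>A. f x) else 0)"
  by simp

lemma mult_if_zero:
  "c * (if Q then x else 0) = (if Q then c * x else (0::'a::semiring_0))"
  "(if Q then x else 0) * c = (if Q then x * c else (0::'a::semiring_0))"
  by simp_all

lemma sum_rotate3:
  "(\<Sum>a\<in>A. \<Sum>b\<in>B. \<Sum>c\<in>C. f a b c) = (\<Sum>b\<in>B. \<Sum>c\<in>C. \<Sum>a\<in>A. f a b c)"
  by (subst sum.swap) (rule sum.cong[OF refl], rule sum.swap)

lemma sum_rotate4: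
  "(\<Sum>a\<in>A. \<Sum>b\<in>B. \<Sum>c\<in>C. \<Sum>d\<in>D. f a b c d) = (\<Sum>b\<in>B. \<Sum>c\<in>C. \<Sum>d\<in>D. \<Sum>a\<in>A. f a b c d)"
  by (subst sum.swap) (rule sum.cong[OF refl], rule sum_rotate3)

lemma sum_rotate5:
  "(\<Sum>a\<in>A. \<Sum>b\<in>B. \<Sum>c\<in>C. \<Sum>d\<in>D. \<Sum>e\<in>G. f a b c d e)
     = (\<Sum>b\<in>B. \<Sum>c\<in>C. \<Sum>d\<in>D. \<Sum>e\<in>G. \<Sum>a\<in>A. f a b c d e)"
  by (subst sum.swap) (rule sum.cong[OF refl], rule sum_rotate4)


lemma matrix_mult_entry: "(A ** B) $ i $ j = (\<Sum>k\<in>UNIV. A$i$k * B$k$j)"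
  by (simp add: matrix_matrix_mult_def)

lemma E_entry: "E a b $ i $ j = (if i = a then if j = b then 1 else 0 else 0)"
  by (simp add: E_def)

lemma E_mult_entry: "(E a b ** x) $ u $ v = (if u = a then x$b$v else 0)"
  by (simp add: matrix_mult_entry E_entry mult_if_zero sum_if_zero sum.delta)

lemma mult_E_entry: "(x ** E c d) $ u $ v = (if v = d then x$u$c else 0)"
  by (simp add: matrix_mult_entry E_entry mult_if_zero sum_if_zero sum.delta' cong: if_cong)

lemma sum_E_E_entry:
  "(\<Sum>a\<in>UNIV. \<Sum>b\<in>UNIV. \<Sum>c\<in>UNIV. \<Sum>d\<in>UNIV. E \<alpha> \<beta> $a$b * E \<gamma> \<delta> $c$d * f a b c d)
     = (f \<alpha> \<beta> \<gamma> \<delta> :: 'a::field)"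
  by (simp add: E_entry mult_if_zero sum_if_zero sum.delta cong: if_cong)

lemma msmult_entry: "msmult c x $ i $ j = c * x $ i $ j"
  by (simp add: msmult_def)

lemma matrix_eq_sum_E: "x = (\<Sum>b\<in>UNIV. \<Sum>c\<in>UNIV. msmult (x$b$c) (E b c))"
  by (simp add: vec_eq_iff msmult_entry E_entry mult_if_zero sum_if_zero sum.delta cong: if_cong)

lemma F_linear_zero: "F_linear R \<Longrightarrow> R 0 = 0"
  by (metis F_linear_def add_cancel_right_right)

lemma F_linear_sum:
  assumes "F_linear R" "finite A"
  shows "R (\<Sum>i\<in>A. f i) = (\<Sum>i\<in>A. R (f i))"
  using assms(2) by (induction A rule: finite_induct) (use assms(1) in \<open>auto simp: F_linear_zero F_linear_def\<close>)

lemma P_entry: "P r x $ u $ v = (\<Sum>b\<in>UNIV. \<Sum>c\<in>UNIV. r u b c v * x$b$c)"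
  by (simp add: P_def E_mult_entry mult_E_entry mult_if_zero sum_if_zero sum.delta sum.delta')

lemma P_E_entry: "P r (E b c) $ u $ v = r u b c v"
  by (simp add: P_entry E_entry mult_if_zero sum_if_zero sum.delta cong: if_cong)

lemma inj_P: "inj (P :: ('a::field, 'n::finite) tensor2 \<Rightarrow> 'a^'n^'n \<Rightarrow> 'a^'n^'n)"
proof (rule injI, intro ext)
  fix r r' :: "('a, 'n) tensor2" and u b c v
  assume "P r = P r'"
  then have "P r (E b c) $ u $ v = P r' (E b c) $ u $ v" by simp
  then show "r u b c v = r' u b c v" by (simp add: P_E_entry)
qed

lemma F_linear_P: "F_linear (P r)"
  unfolding F_linear_def
  by (auto simp: vec_eq_iff P_entry msmult_entry distrib_left sum.distrib sum_distrib_left mult_ac)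

lemma F_linear_eq_P: "F_linear R \<Longrightarrow> R = P (\<lambda>u b c v. R (E b c) $ u $ v)"
proof
  fix x assume lin: "F_linear R"
  have "R x = R (\<Sum>b\<in>UNIV. \<Sum>c\<in>UNIV. msmult (x$b$c) (E b c))"
    by (subst matrix_eq_sum_E) (rule refl)
  also have "\<dots> = (\<Sum>b\<in>UNIV. \<Sum>c\<in>UNIV. msmult (x$b$c) (R (E b c)))"
    using lin by (simp add: F_linear_sum) (simp add: F_linear_def)
  finally show "R x = P (\<lambda>u b c v. R (E b c) $ u $ v) x"
    by (simp add: vec_eq_iff P_entry msmult_entry mult_ac)
qed

lemma r12_entry: "r12 r i j k l m p = r i j k l * (if m = p then 1 else 0)"
  by (simp add: r12_def elem3_def E_entry mat_def mult_if_zero sum_if_zero sum.delta cong: if_cong)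

lemma r13_entry: "r13 r i j k l m p = r i j m p * (if k = l then 1 else 0)"
  by (simp add: r13_def elem3_def E_entry mat_def mult_if_zero sum_if_zero sum.delta cong: if_cong)

lemma r23_entry: "r23 r i j k l m p = r k l m p * (if i = j then 1 else 0)"
  by (simp add: r23_def elem3_def E_entry mat_def mult_if_zero sum_if_zero sum.delta cong: if_cong)

lemma AYBE_iff:
  "AYBE r \<longleftrightarrow> (\<forall>i j k l m p. (\<Sum>s\<in>UNIV. r i j k s * r s l m p)
     = (\<Sum>q\<in>UNIV. r i q m p * r q j k l) + (\<Sum>t\<in>UNIV. r k l m t * r i j t p))"
proof -
  have "mult3 (r13 r) (r12 r) i j k l m p = (\<Sum>q\<in>UNIV. r i q m p * r q j k l)"
    and "mult3 (r12 r) (r23 r) i j k l m p = (\<Sum>s\<in>UNIV. r i j k s * r s l m p)"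
    and "mult3 (r23 r) (r13 r) i j k l m p = (\<Sum>t\<in>UNIV. r k l m t * r i j t p)" for i j k l m p
    by (simp_all add: mult3_def r12_entry r13_entry r23_entry mult_if_zero sum_if_zero
        sum.delta sum.delta' cong: if_cong)
  then show ?thesis
    unfolding AYBE_def by (auto simp: algebra_simps)
qed

lemma P_mult_P_entry:
  "(P r x ** P r y) $ u $ v = (\<Sum>\<alpha>\<in>UNIV. \<Sum>\<beta>\<in>UNIV. \<Sum>\<gamma>\<in>UNIV. \<Sum>\<delta>\<in>UNIV.
     x$\<alpha>$\<beta> * y$\<gamma>$\<delta> * (\<Sum>w\<in>UNIV. r u \<alpha> \<beta> w * r w \<gamma> \<delta> v))"
proof -
  have "(P r x ** P r y) $ u $ v = (\<Sum>w\<in>UNIV. \<Sum>\<gamma>\<in>UNIV. \<Sum>\<delta>\<in>UNIV. \<Sum>\<alpha>\<in>UNIV. \<Sum>\<beta>\<in>UNIV.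
      r u \<alpha> \<beta> w * x$\<alpha>$\<beta> * (r w \<gamma> \<delta> v * y$\<gamma>$\<delta>))"
    by (simp add: matrix_mult_entry P_entry sum_distrib_left sum_distrib_right)
  also have "\<dots> = (\<Sum>\<alpha>\<in>UNIV. \<Sum>\<beta>\<in>UNIV. \<Sum>\<gamma>\<in>UNIV. \<Sum>\<delta>\<in>UNIV. \<Sum>w\<in>UNIV.
      r u \<alpha> \<beta> w * x$\<alpha>$\<beta> * (r w \<gamma> \<delta> v * y$\<gamma>$\<delta>))"
    by (rule trans[OF sum_rotate5], rule trans[OF sum_rotate4], rule sum_rotate4)
  finally show ?thesis
    by (simp add: sum_distrib_left mult_ac)
qed

lemma P_rota_baxter_entry:
  "P r (P r x ** y + x ** P r y) $ u $ v = (\<Sum>\<alpha>\<in>UNIV. \<Sum>\<beta>\<in>UNIV. \<Sum>\<gamma>\<in>UNIV. \<Sum>\<delta>\<in>UNIV.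
     x$\<alpha>$\<beta> * y$\<gamma>$\<delta> *
     ((\<Sum>b\<in>UNIV. r u b \<delta> v * r b \<alpha> \<beta> \<gamma>) + (\<Sum>c\<in>UNIV. r u \<alpha> c v * r \<beta> \<gamma> \<delta> c)))"
proof -
  have "P r (P r x ** y + x ** P r y) $ u $ v
    = (\<Sum>b\<in>UNIV. \<Sum>\<delta>\<in>UNIV. \<Sum>\<gamma>\<in>UNIV. \<Sum>\<alpha>\<in>UNIV. \<Sum>\<beta>\<in>UNIV.
        r u b \<delta> v * (r b \<alpha> \<beta> \<gamma> * x$\<alpha>$\<beta> * y$\<gamma>$\<delta>))
    + (\<Sum>\<alpha>\<in>UNIV. \<Sum>c\<in>UNIV. \<Sum>\<beta>\<in>UNIV. \<Sum>\<gamma>\<in>UNIV. \<Sum>\<delta>\<in>UNIV.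
        r u \<alpha> c v * (x$\<alpha>$\<beta> * (r \<beta> \<gamma> \<delta> c * y$\<gamma>$\<delta>)))"
    by (simp add: matrix_mult_entry P_entry sum_distrib_left sum_distrib_right
        distrib_left distrib_right sum.distrib)
  also have "(\<Sum>b\<in>UNIV. \<Sum>\<delta>\<in>UNIV. \<Sum>\<gamma>\<in>UNIV. \<Sum>\<alpha>\<in>UNIV. \<Sum>\<beta>\<in>UNIV.
        r u b \<delta> v * (r b \<alpha> \<beta> \<gamma> * x$\<alpha>$\<beta> * y$\<gamma>$\<delta>))
    = (\<Sum>\<alpha>\<in>UNIV. \<Sum>\<beta>\<in>UNIV. \<Sum>\<gamma>\<in>UNIV. \<Sum>\<delta>\<in>UNIV. \<Sum>b\<in>UNIV.
        r u b \<delta> v * (r b \<alpha> \<beta> \<gamma> * x$\<alpha>$\<beta> * y$\<gamma>$\<delta>))"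
    by (rule trans[OF sum_rotate5], rule trans[OF sum_rotate4], rule sum_rotate3)
  also have "(\<Sum>\<alpha>\<in>UNIV. \<Sum>c\<in>UNIV. \<Sum>\<beta>\<in>UNIV. \<Sum>\<gamma>\<in>UNIV. \<Sum>\<delta>\<in>UNIV.
        r u \<alpha> c v * (x$\<alpha>$\<beta> * (r \<beta> \<gamma> \<delta> c * y$\<gamma>$\<delta>)))
    = (\<Sum>\<alpha>\<in>UNIV. \<Sum>\<beta>\<in>UNIV. \<Sum>\<gamma>\<in>UNIV. \<Sum>\<delta>\<in>UNIV. \<Sum>c\<in>UNIV.
        r u \<alpha> c v * (x$\<alpha>$\<beta> * (r \<beta> \<gamma> \<delta> c * y$\<gamma>$\<delta>)))"
    by (rule sum.cong[OF refl], rule sum_rotate4)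
  finally show ?thesis
    by (simp add: sum_distrib_left distrib_left sum.distrib mult_ac)
qed

lemma rota_baxter_identity_P_iff_AYBE:
  "(\<forall>x y. P r x ** P r y = P r (P r x ** y + x ** P r y)) \<longleftrightarrow> AYBE r"
proof
  assume rb: "\<forall>x y. P r x ** P r y = P r (P r x ** y + x ** P r y)"
  show "AYBE r"
    unfolding AYBE_iff
  proof (intro allI)
    fix u \<alpha> \<beta> \<gamma> \<delta> v
    have "(P r (E \<alpha> \<beta>) ** P r (E \<gamma> \<delta>)) $ u $ v
      = P r (P r (E \<alpha> \<beta>) ** E \<gamma> \<delta> + E \<alpha> \<beta> ** P r (E \<gamma> \<delta>)) $ u $ v"
      using rb by simp
    then show "(\<Sum>w\<in>UNIV. r u \<alpha> \<beta> w * r w \<gamma> \<delta> v)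
      = (\<Sum>b\<in>UNIV. r u b \<delta> v * r b \<alpha> \<beta> \<gamma>) + (\<Sum>c\<in>UNIV. r \<beta> \<gamma> \<delta> c * r u \<alpha> c v)"
      unfolding P_mult_P_entry P_rota_baxter_entry sum_E_E_entry by (simp add: mult.commute)
  qed
next
  assume aybe: "AYBE r"
  have coeff_eq: "(\<Sum>w\<in>UNIV. r u \<alpha> \<beta> w * r w \<gamma> \<delta> v)
    = (\<Sum>b\<in>UNIV. r u b \<delta> v * r b \<alpha> \<beta> \<gamma>) + (\<Sum>c\<in>UNIV. r u \<alpha> c v * r \<beta> \<gamma> \<delta> c)"
    for u \<alpha> \<beta> \<gamma> \<delta> v
    using aybe[unfolded AYBE_iff, rule_format, of u \<alpha> \<beta> \<gamma> \<delta> v] by (simp add: mult_ac)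
  show "\<forall>x y. P r x ** P r y = P r (P r x ** y + x ** P r y)"
    by (simp add: vec_eq_iff P_mult_P_entry P_rota_baxter_entry coeff_eq)
qed

lemma rota_baxter0_P_iff_AYBE: "rota_baxter0 (P r) \<longleftrightarrow> AYBE r"
  unfolding rota_baxter0_def rota_baxter_identity_P_iff_AYBE using F_linear_P by blast

theorem theorem4:
  shows "bij_betw (P :: ('a::field,'n::finite) tensor2 \<Rightarrow> 'a^'n^'n \<Rightarrow> 'a^'n^'n)
           {r. AYBE r} {R. rota_baxter0 R}"
proof (rule bij_betw_imageI)
  show "inj_on P {r. AYBE r}"
    using inj_P by (rule inj_on_subset) simp
  show "P ` {r. AYBE r} = {R. rota_baxter0 R}"
  proof (intro equalityI subsetI)
    fix R assume "R \<in> P ` {r. AYBE r}"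
    then show "R \<in> {R. rota_baxter0 R}"
      using rota_baxter0_P_iff_AYBE by blast
  next
    fix R assume "R \<in> {R. rota_baxter0 R}"
    then have rb: "rota_baxter0 R" by simp
    define r where "r = (\<lambda>u b c v. R (E b c) $ u $ v)"
    have R_eq: "R = P r"
      unfolding r_def using rb F_linear_eq_P rota_baxter0_def by blast
    with rb have "AYBE r"
      using rota_baxter0_P_iff_AYBE by blast
    with R_eq show "R \<in> P ` {r. AYBE r}" by blast
  qed
qed

end
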